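(* Let $T_{de}:l_\infty\to l_\infty$ be $T_{de}(x)=(0,x_0,x_1,\dots)$ with adjoint $T_{de}^*$. Then $$\Delta(T_{de}^* )=\mathcal B\cup\{(1-\delta)(1,\delta,\delta^2,\dots):\delta\in[0,1)\},$$ where for $\delta=0$ the sequence is $(1,0,0,\dots)$.
   Context: $l_\infty$: real bounded sequences indexed by $\mathbb N$. $ba(\mathbb N)$: norm dual of $l_\infty$, pairing $\langle x,\mu\rangle$. Adjoint: $\langle x,T^*(\mu)\rangle=\langle T(x),\mu\rangle$. $\Delta$: finitely additive probability measures on $2^{\mathbb N}$; a sequence $(p_n)$ with $p_n\ge0$, $\sum p_n=1$ is identified with the countably additive measure it defines. $\Delta(T^* )$: elements of $\Delta$ that are eigenvectors of $T^*$ (nonzero $\mu$ with $T^*\mu=\lambda\mu$, $\lambda\in\mathbb R$). $\mathcal B$: the set of Banach–Mazur limits, i.e. $\mu\in\Delta$ with $\langle x,\mu\rangle=\langle(x_1,x_2,\dots),\mu\rangle$ for all $x\in l_\infty$. *)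

theory Defs
  imports "HOL-Analysis.Analysis"
begin

text \<open>l_infty is modelled as the Banach space of bounded (automatically continuous,
  nat being discrete) real functions on nat; ba(N), its norm dual, as the bounded
  linear functionals on it; the pairing <x,mu> is blinfun_apply mu x.\<close>

type_synonym linf = "nat \<Rightarrow>\<^sub>C real"
type_synonym ba = "linf \<Rightarrow>\<^sub>L real"

definition ind :: "nat set \<Rightarrow> linf" where
  "ind A = Bcontfun (indicator A)"

text \<open>Delta: elements of ba(N) that are finitely additive probability measures,
  i.e. mu(A) = <1_A, mu> is nonnegative and mu(N) = 1 (finite additivity is
  automatic from linearity).\<close>
definition Delta :: "ba set" where
  "Delta = {\<mu>. (\<forall>A. blinfun_apply \<mu> (ind A) \<ge> 0) \<and> blinfun_apply \<mu> (ind UNIV) = 1}"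

text \<open>Eigenvectors of the adjoint T^*, where <x, T^* mu> = <T x, mu>.\<close>
definition adj_eigvec :: "(linf \<Rightarrow> linf) \<Rightarrow> ba \<Rightarrow> bool" where
  "adj_eigvec T \<mu> \<longleftrightarrow> \<mu> \<noteq> 0 \<and> (\<exists>c::real. \<forall>x. blinfun_apply \<mu> (T x) = c * blinfun_apply \<mu> x)"

definition Delta_adj :: "(linf \<Rightarrow> linf) \<Rightarrow> ba set" where
  "Delta_adj T = {\<mu> \<in> Delta. adj_eigvec T \<mu>}"

definition T_de :: "linf \<Rightarrow> linf" where
  "T_de x = Bcontfun (\<lambda>n. if n = 0 then 0 else apply_bcontfun x (n - 1))"

definition lshift :: "linf \<Rightarrow> linf" where
  "lshift x = Bcontfun (\<lambda>n. apply_bcontfun x (Suc n))"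

definition BM :: "ba set" where
  "BM = {\<mu> \<in> Delta. \<forall>x. blinfun_apply \<mu> x = blinfun_apply \<mu> (lshift x)}"

text \<open>The functional given by the countably additive measure (1-d)(1,d,d^2,...);
  note 0^0 = 1, so d = 0 gives (1,0,0,...).\<close>
definition geom_measures :: "ba set" where
  "geom_measures = {\<mu>. \<exists>\<delta>::real. 0 \<le> \<delta> \<and> \<delta> < 1 \<and>
     (\<forall>x. blinfun_apply \<mu> x = (\<Sum>n. (1 - \<delta>) * \<delta> ^ n * apply_bcontfun x n))}"

end

theory Submission
  imports Defs
begin

text \<open>Every x decomposes as x = x(0) e_0 + T (S x), where S is the left shift and e_0 the
  indicator of {0}. Hence an eigenfunctional \<mu> of the adjoint T* with eigenvalue c satisfies
  \<mu>(x) = x(0) \<mu>(e_0) + c \<mu>(S x), and evaluating T at the constant 1 gives c = 1 - \<mu>(e_0),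
  which lies in [0,1] for \<mu> \<in> Delta. If c = 1 the recurrence says that \<mu> is shift invariant,
  i.e. a Banach-Mazur limit. If c < 1, iterating it N times leaves a remainder c^N \<mu>(S^N x)
  that tends to 0, so \<mu>(x) = \<Sum>n. (1 - c) c^n x(n). Conversely, both kinds of functionals
  are eigenvectors, with eigenvalues 1 and \<delta> respectively.\<close>

lemma apply_Bcontfun_bounded:
  fixes f :: "nat \<Rightarrow> real"
  assumes "\<And>n. \<bar>f n\<bar> \<le> B"
  shows "apply_bcontfun (Bcontfun f) = f"
  by (rule Bcontfun_inverse, rule bcontfun_normI[where b = B]) (use assms in auto)

lemma abs_apply_linf_le_norm: "\<bar>apply_bcontfun (x :: linf) n\<bar> \<le> norm x"
  using norm_bounded[of x n] by simp

lemma apply_ind [simp]: "apply_bcontfun (ind A) = indicator A"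
  unfolding ind_def by (rule apply_Bcontfun_bounded[where B = 1]) (auto simp: indicator_def)

lemma apply_T_de [simp]:
  "apply_bcontfun (T_de x) n = (if n = 0 then 0 else apply_bcontfun x (n - 1))"
  unfolding T_de_def
  by (subst apply_Bcontfun_bounded[where B = "norm x"]) (auto simp: abs_apply_linf_le_norm)

lemma apply_lshift [simp]: "apply_bcontfun (lshift x) n = apply_bcontfun x (Suc n)"
  unfolding lshift_def
  by (subst apply_Bcontfun_bounded[where B = "norm x"]) (auto simp: abs_apply_linf_le_norm)

lemma apply_lshift_power: "apply_bcontfun ((lshift ^^ N) x) n = apply_bcontfun x (n + N)"
  by (induction N arbitrary: n) auto

lemma norm_lshift_le: "norm (lshift x) \<le> norm x"
  by (rule norm_bound) (simp add: abs_apply_linf_le_norm[simplified])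

lemma norm_lshift_power_le: "norm ((lshift ^^ N) x) \<le> norm x"
  by (induction N) (auto intro: order_trans[OF norm_lshift_le])

lemma lshift_T_de [simp]: "lshift (T_de x) = x"
  by (rule bcontfun_eqI) auto

lemma T_de_lshift_decomp: "x = apply_bcontfun x 0 *\<^sub>R ind {0} + T_de (lshift x)"
  by (rule bcontfun_eqI) (auto simp: indicator_def)

lemma T_de_ind_UNIV: "T_de (ind UNIV) = ind UNIV - ind {0}"
  by (rule bcontfun_eqI) (auto simp: indicator_def)

lemma ind_UNIV_minus_ind: "ind UNIV - ind A = ind (- A)"
  by (rule bcontfun_eqI) (auto simp: indicator_def)

lemma Delta_nonzero: "\<mu> \<in> Delta \<Longrightarrow> \<mu> \<noteq> 0"
  unfolding Delta_def by auto

lemma T_de_eigen_recurrence: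
  assumes eig: "\<And>x. blinfun_apply \<mu> (T_de x) = c * blinfun_apply \<mu> x"
  shows "blinfun_apply \<mu> z = apply_bcontfun z 0 * blinfun_apply \<mu> (ind {0}) + c * blinfun_apply \<mu> (lshift z)"
proof -
  have "blinfun_apply \<mu> z = blinfun_apply \<mu> (apply_bcontfun z 0 *\<^sub>R ind {0} + T_de (lshift z))"
    by (subst T_de_lshift_decomp[of z]) simp
  then show ?thesis
    by (simp add: blinfun.add_right blinfun.scaleR_right eig)
qed

lemma T_de_eigenvalue_Delta:
  assumes "\<mu> \<in> Delta" and eig: "\<And>x. blinfun_apply \<mu> (T_de x) = c * blinfun_apply \<mu> x"
  shows "c = 1 - blinfun_apply \<mu> (ind {0})" and "0 \<le> c" and "c \<le> 1"
proof -
  have one: "blinfun_apply \<mu> (ind UNIV) = 1" and pos: "\<And>A. blinfun_apply \<mu> (ind A) \<ge> 0"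
    using \<open>\<mu> \<in> Delta\<close> unfolding Delta_def by auto
  show c: "c = 1 - blinfun_apply \<mu> (ind {0})"
    using eig[of "ind UNIV"] one by (simp add: T_de_ind_UNIV blinfun.diff_right)
  also have "\<dots> = blinfun_apply \<mu> (ind (- {0}))"
    using one by (simp flip: ind_UNIV_minus_ind add: blinfun.diff_right)
  finally show "0 \<le> c" using pos by simp
  show "c \<le> 1" using c pos[of "{0}"] by simp
qed

lemma sums_of_shift_recurrence:
  fixes \<mu> :: ba
  assumes "\<bar>c\<bar> < 1"
    and rec: "\<And>z. blinfun_apply \<mu> z = (1 - c) * apply_bcontfun z 0 + c * blinfun_apply \<mu> (lshift z)"
  shows "(\<lambda>n. (1 - c) * c ^ n * apply_bcontfun x n) sums blinfun_apply \<mu> x"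
proof -
  define p where "p N = (\<Sum>n<N. (1 - c) * c ^ n * apply_bcontfun x n)" for N
  have partial: "blinfun_apply \<mu> x = p N + c ^ N * blinfun_apply \<mu> ((lshift ^^ N) x)" for N
  proof (induction N)
    case 0
    show ?case by (simp add: p_def)
  next
    case (Suc N)
    have "blinfun_apply \<mu> ((lshift ^^ N) x)
        = (1 - c) * apply_bcontfun x N + c * blinfun_apply \<mu> ((lshift ^^ Suc N) x)"
      using rec[of "(lshift ^^ N) x"] by (simp add: apply_lshift_power)
    with Suc show ?case by (simp add: p_def algebra_simps)
  qed
  have remainder_le: "\<bar>blinfun_apply \<mu> x - p N\<bar> \<le> \<bar>c\<bar> ^ N * (norm \<mu> * norm x)" for N
  proof -
    have "\<bar>blinfun_apply \<mu> x - p N\<bar> = \<bar>c\<bar> ^ N * norm (blinfun_apply \<mu> ((lshift ^^ N) x))"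
      using partial[of N] by (simp add: abs_mult power_abs)
    also have "\<dots> \<le> \<bar>c\<bar> ^ N * (norm \<mu> * norm ((lshift ^^ N) x))"
      by (intro mult_left_mono norm_blinfun) auto
    also have "\<dots> \<le> \<bar>c\<bar> ^ N * (norm \<mu> * norm x)"
      by (intro mult_left_mono norm_lshift_power_le) auto
    finally show ?thesis .
  qed
  have "(\<lambda>N. \<bar>c\<bar> ^ N * (norm \<mu> * norm x)) \<longlonglongrightarrow> 0"
    using assms(1) by (intro tendsto_mult_left_zero LIMSEQ_power_zero) auto
  then have "(\<lambda>N. blinfun_apply \<mu> x - p N) \<longlonglongrightarrow> 0"
    by (rule Lim_null_comparison[rotated]) (simp add: remainder_le)
  then have "p \<longlonglongrightarrow> blinfun_apply \<mu> x"
    using tendsto_diff[OF tendsto_const[of "blinfun_apply \<mu> x"]] by fastforce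
  then show ?thesis
    unfolding sums_def p_def .
qed

lemma Delta_adj_T_de_subset: "Delta_adj T_de \<subseteq> BM \<union> geom_measures"
proof
  fix \<mu> assume "\<mu> \<in> Delta_adj T_de"
  then obtain c where D: "\<mu> \<in> Delta"
    and eig: "\<And>x. blinfun_apply \<mu> (T_de x) = c * blinfun_apply \<mu> x"
    unfolding Delta_adj_def adj_eigvec_def by auto
  note c = T_de_eigenvalue_Delta[OF D eig]
  have rec: "blinfun_apply \<mu> z = (1 - c) * apply_bcontfun z 0 + c * blinfun_apply \<mu> (lshift z)" for z
    using T_de_eigen_recurrence[OF eig, of z] c(1) by simp
  show "\<mu> \<in> BM \<union> geom_measures"
  proof (cases "c = 1")
    case True
    then have "blinfun_apply \<mu> z = blinfun_apply \<mu> (lshift z)" for z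
      using rec[of z] by simp
    then have "\<mu> \<in> BM" using D unfolding BM_def by simp
    then show ?thesis ..
  next
    case False
    then have "0 \<le> c" "c < 1" using c by auto
    then have "\<mu> \<in> geom_measures"
      using sums_of_shift_recurrence[OF _ rec] unfolding geom_measures_def
      by (auto intro!: exI[of _ c] simp: sums_iff)
    then show ?thesis ..
  qed
qed

lemma BM_subset_Delta_adj_T_de: "BM \<subseteq> Delta_adj T_de"
proof
  fix \<mu> assume "\<mu> \<in> BM"
  then have D: "\<mu> \<in> Delta" and shift: "\<And>x. blinfun_apply \<mu> x = blinfun_apply \<mu> (lshift x)"
    unfolding BM_def by auto
  have "blinfun_apply \<mu> (T_de x) = 1 * blinfun_apply \<mu> x" for x
    using shift[of "T_de x"] by simp
  then show "\<mu> \<in> Delta_adj T_de"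
    using D Delta_nonzero[OF D] unfolding Delta_adj_def adj_eigvec_def by blast
qed

lemma summable_geometric_weighted:
  assumes "0 \<le> (d :: real)" "d < 1"
  shows "summable (\<lambda>n. (1 - d) * d ^ n * apply_bcontfun x n)"
proof (rule summable_comparison_test'[where N = 0])
  show "summable (\<lambda>n. (1 - d) * d ^ n * norm x)"
    using assms by (intro summable_mult2 summable_mult summable_geometric) auto
  show "norm ((1 - d) * d ^ n * apply_bcontfun x n) \<le> (1 - d) * d ^ n * norm x" for n
    using assms abs_apply_linf_le_norm[of x n] by (simp add: abs_mult mult_left_mono)
qed

lemma geometric_weights_sums_one:
  assumes "0 \<le> (d :: real)" "d < 1"
  shows "(\<lambda>n. (1 - d) * d ^ n) sums 1"
  using sums_mult[OF geometric_sums, of d "1 - d"] assms by simp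

lemma geometric_weighted_sum_T_de:
  assumes "0 \<le> (d :: real)" "d < 1"
  shows "(\<Sum>n. (1 - d) * d ^ n * apply_bcontfun (T_de x) n)
       = d * (\<Sum>n. (1 - d) * d ^ n * apply_bcontfun x n)"
proof -
  have "(\<lambda>n. d * ((1 - d) * d ^ n * apply_bcontfun x n))
          sums (d * (\<Sum>n. (1 - d) * d ^ n * apply_bcontfun x n))"
    by (rule sums_mult[OF summable_sums[OF summable_geometric_weighted[OF assms]]])
  then have "(\<lambda>n. (1 - d) * d ^ Suc n * apply_bcontfun (T_de x) (Suc n))
               sums (d * (\<Sum>n. (1 - d) * d ^ n * apply_bcontfun x n))"
    by (simp add: algebra_simps)
  then have "(\<lambda>n. (1 - d) * d ^ n * apply_bcontfun (T_de x) n)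
               sums (d * (\<Sum>n. (1 - d) * d ^ n * apply_bcontfun x n))"
    by (subst (asm) sums_Suc_iff) simp
  then show ?thesis by (simp add: sums_iff)
qed

lemma geom_measures_subset_Delta_adj_T_de: "geom_measures \<subseteq> Delta_adj T_de"
proof
  fix \<mu> assume "\<mu> \<in> geom_measures"
  then obtain d :: real where d: "0 \<le> d" "d < 1"
    and \<mu>: "\<And>x. blinfun_apply \<mu> x = (\<Sum>n. (1 - d) * d ^ n * apply_bcontfun x n)"
    unfolding geom_measures_def by auto
  have D: "\<mu> \<in> Delta"
    unfolding Delta_def
  proof (intro CollectI conjI allI)
    show "blinfun_apply \<mu> (ind A) \<ge> 0" for A
      unfolding \<mu> using summable_geometric_weighted[OF d, of "ind A"] d
      by (intro suminf_nonneg) (auto simp: indicator_def)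
    show "blinfun_apply \<mu> (ind UNIV) = 1"
      unfolding \<mu> using geometric_weights_sums_one[OF d] by (simp add: sums_iff)
  qed
  have "blinfun_apply \<mu> (T_de x) = d * blinfun_apply \<mu> x" for x
    unfolding \<mu> by (rule geometric_weighted_sum_T_de[OF d])
  then show "\<mu> \<in> Delta_adj T_de"
    using D Delta_nonzero[OF D] unfolding Delta_adj_def adj_eigvec_def by blast
qed

theorem mainTheorem15:
  shows "Delta_adj T_de = BM \<union> geom_measures"
  using Delta_adj_T_de_subset BM_subset_Delta_adj_T_de geom_measures_subset_Delta_adj_T_de
  by blast

end
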